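(* Consider the two-species BGK system and its mild solutions as described in the context, under the assumptions listed there. Let $(f_1,f_2)$ with $f_1,f_2\ge0$ be a mild solution with positive initial data $f_1^0,f_2^0>0$. Then $f_1,f_2>0$ almost everywhere.
   Context: Fix $N\ge1$, masses $m_1,m_2>0$, $\varepsilon\in(0,1]$, $\alpha\in[0,1]$, $\delta$ with $\frac{\frac{m_1}{m_2}\varepsilon-1}{1+\frac{m_1}{m_2}\varepsilon}\le\delta\le 1$, and $\gamma$ with $0\le\gamma\le\frac{m_1}{N}(1-\delta)\big[(1+\frac{m_1}{m_2}\varepsilon)\delta+1-\frac{m_1}{m_2}\varepsilon\big]$. For $f_k(x,v,t)\ge0$ define $n_k=\int f_k\,dv$, $n_ku_k=\int vf_k\,dv$, $Nn_kT_k=\int m_k|v-u_k|^2f_k\,dv$, and $u_{12}=\delta u_1+(1-\delta)u_2$, $u_{21}=u_2-\frac{m_1}{m_2}\varepsilon(1-\delta)(u_2-u_1)$, $T_{12}=\alpha T_1+(1-\alpha)T_2+\gamma|u_1-u_2|^2$, $T_{21}=\big[\frac1N\varepsilon m_1(1-\delta)(\frac{m_1}{m_2}\varepsilon(\delta-1)+\delta+1)-\varepsilon\gamma\big]|u_1-u_2|^2+\varepsilon(1-\alpha)T_1+(1-\varepsilon(1-\alpha))T_2$. Maxwellians: $M_k=\frac{n_k}{(2\pi T_k/m_k)^{N/2}}e^{-\frac{|v-u_k|^2}{2T_k/m_k}}$, $M_{12}=\frac{n_1}{(2\pi T_{12}/m_1)^{N/2}}e^{-\frac{|v-u_{12}|^2}{2T_{12}/m_1}}$,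 $M_{21}=\frac{n_2}{(2\pi T_{21}/m_2)^{N/2}}e^{-\frac{|v-u_{21}|^2}{2T_{21}/m_2}}$. The system is $\partial_tf_1+v\cdot\nabla_xf_1=\nu_{11}n_1(M_1-f_1)+\nu_{12}n_2(M_{12}-f_1)$, $\partial_tf_2+v\cdot\nabla_xf_2=\nu_{22}n_2(M_2-f_2)+\nu_{21}n_1(M_{21}-f_2)$, $f_k(t=0)=f_k^0$. Assumptions: (1) periodicity in $x$ with periods $a_1,\dots,a_N>0$ for solutions and initial data, spatial domain $\Lambda=\{x: x_i\in(0,a_i)\}$; (2) $f_k^0\ge0$, $(1+|v|^2)f_k^0\in L^1(\Lambda\times\mathbb{R}^N)$, $\int\!\!\int f_k^0\,dv\,dx=1$; (3) $\sup_{x,v}f_k^0(x,v)(1+|v|^q)=\frac12A_0<\infty$ for some $q>N+2$; (4) $\gamma_k(x,t):=\int f_k^0(x-vt,v)\,dv\ge C_0>0$ for all $t$; (5) $\nu_{jk}n_k=\tilde\nu_{jk}\frac{n_k}{n_1+n_2}$ with constants $\tilde\nu_{jk}>0$. Mild solution: $(f_1,f_2)$ with $f_k\ge0$, $(1+|v|^2)f_k\in L^1$, such that for $k\neq j$, writing $\rho_k=\frac{n_k}{n_1+n_2}$, $y_s=x+(s-t)v$, $f_k(x,v,t)=e^{-a_k(x,v,t)}f_k^0(x-tv,v)+e^{-a_k(x,v,t)}\int_0^t\big[\tilde\nu_{kk}\rho_k(y_s,s)M_k(y_s,v,s)+\tilde\nu_{kj}\rho_j(y_s,s)M_{kj}(y_s,v,s)\big]e^{a_k(y_s,v,s)}\,ds$,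 with $a_k(x,v,t)=\int_0^t\big[\tilde\nu_{kk}\rho_k(y_s,s)+\tilde\nu_{kj}\rho_j(y_s,s)\big]ds$. *)

theory Defs
  imports "HOL-Analysis.Analysis"
begin

text \<open>Phase-space densities f(x,v,t) with x, v in R^N, N = CARD('n), t real.
  Velocity integrals are Lebesgue integrals w.r.t. lborel on real^'n.\<close>

type_synonym 'n dist = "real^'n \<Rightarrow> real^'n \<Rightarrow> real \<Rightarrow> real"

definition dens :: "'n::finite dist \<Rightarrow> real^'n \<Rightarrow> real \<Rightarrow> real" where
  "dens f x t = (\<integral>v. f x v t \<partial>lborel)"

definition vel :: "'n::finite dist \<Rightarrow> real^'n \<Rightarrow> real \<Rightarrow> real^'n" where
  "vel f x t = (1 / dens f x t) *\<^sub>R (\<integral>v. f x v t *\<^sub>R v \<partial>lborel)"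

definition temp :: "real \<Rightarrow> 'n::finite dist \<Rightarrow> real^'n \<Rightarrow> real \<Rightarrow> real" where
  "temp m f x t = (\<integral>v. m * (norm (v - vel f x t))\<^sup>2 * f x v t \<partial>lborel)
                  / (real CARD('n) * dens f x t)"

definition maxw :: "real \<Rightarrow> real \<Rightarrow> real^'n::finite \<Rightarrow> real \<Rightarrow> real^'n \<Rightarrow> real" where
  "maxw m n u T v = n / (2 * pi * T / m) powr (real CARD('n) / 2)
                    * exp (- (norm (v - u))\<^sup>2 / (2 * T / m))"

definition u12 :: "real \<Rightarrow> 'n::finite dist \<Rightarrow> 'n dist \<Rightarrow> real^'n \<Rightarrow> real \<Rightarrow> real^'n" where
  "u12 \<delta> f1 f2 x t = \<delta> *\<^sub>R vel f1 x t + (1 - \<delta>) *\<^sub>R vel f2 x t"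

definition u21 :: "real \<Rightarrow> real \<Rightarrow> real \<Rightarrow> real \<Rightarrow> 'n::finite dist \<Rightarrow> 'n dist \<Rightarrow> real^'n \<Rightarrow> real \<Rightarrow> real^'n" where
  "u21 m1 m2 \<epsilon> \<delta> f1 f2 x t =
     vel f2 x t - (m1 / m2 * \<epsilon> * (1 - \<delta>)) *\<^sub>R (vel f2 x t - vel f1 x t)"

definition T12 :: "real \<Rightarrow> real \<Rightarrow> real \<Rightarrow> real \<Rightarrow> 'n::finite dist \<Rightarrow> 'n dist \<Rightarrow> real^'n \<Rightarrow> real \<Rightarrow> real" where
  "T12 m1 m2 \<alpha> \<gamma> f1 f2 x t =
     \<alpha> * temp m1 f1 x t + (1 - \<alpha>) * temp m2 f2 x t + \<gamma> * (norm (vel f1 x t - vel f2 x t))\<^sup>2"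

definition T21 :: "real \<Rightarrow> real \<Rightarrow> real \<Rightarrow> real \<Rightarrow> real \<Rightarrow> real \<Rightarrow> 'n::finite dist \<Rightarrow> 'n dist \<Rightarrow> real^'n \<Rightarrow> real \<Rightarrow> real" where
  "T21 m1 m2 \<epsilon> \<alpha> \<delta> \<gamma> f1 f2 x t =
     (1 / real CARD('n) * \<epsilon> * m1 * (1 - \<delta>) * (m1 / m2 * \<epsilon> * (\<delta> - 1) + \<delta> + 1) - \<epsilon> * \<gamma>)
        * (norm (vel f1 x t - vel f2 x t))\<^sup>2
     + \<epsilon> * (1 - \<alpha>) * temp m1 f1 x t + (1 - \<epsilon> * (1 - \<alpha>)) * temp m2 f2 x t"

definition rho :: "'n::finite dist \<Rightarrow> 'n dist \<Rightarrow> real^'n \<Rightarrow> real \<Rightarrow> real" where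
  "rho fk fj x t = dens fk x t / (dens fk x t + dens fj x t)"

definition acoef :: "real \<Rightarrow> real \<Rightarrow> (real^'n::finite \<Rightarrow> real \<Rightarrow> real) \<Rightarrow> (real^'n \<Rightarrow> real \<Rightarrow> real)
                      \<Rightarrow> real^'n \<Rightarrow> real^'n \<Rightarrow> real \<Rightarrow> real" where
  "acoef nkk nkj rk rj x v t =
     (\<integral>s\<in>{0..t}. (nkk * rk (x + (s - t) *\<^sub>R v) s + nkj * rj (x + (s - t) *\<^sub>R v) s) \<partial>lborel)"

text \<open>Right-hand side of the mild formulation for species k (partner j).
  Mk x v t is the Maxwellian M_k, Mkj x v t the mixture Maxwellian M_kj.\<close>
definition mild_rhs :: "real \<Rightarrow> real \<Rightarrow> (real^'n::finite \<Rightarrow> real \<Rightarrow> real) \<Rightarrow> (real^'n \<Rightarrow> real \<Rightarrow> real)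
     \<Rightarrow> 'n dist \<Rightarrow> 'n dist \<Rightarrow> (real^'n \<Rightarrow> real^'n \<Rightarrow> real) \<Rightarrow> real^'n \<Rightarrow> real^'n \<Rightarrow> real \<Rightarrow> real" where
  "mild_rhs nkk nkj rk rj Mk Mkj f0 x v t =
     exp (- acoef nkk nkj rk rj x v t) * f0 (x - t *\<^sub>R v) v
     + exp (- acoef nkk nkj rk rj x v t) *
       (\<integral>s\<in>{0..t}. (nkk * rk (x + (s - t) *\<^sub>R v) s * Mk (x + (s - t) *\<^sub>R v) v s
                     + nkj * rj (x + (s - t) *\<^sub>R v) s * Mkj (x + (s - t) *\<^sub>R v) v s)
                    * exp (acoef nkk nkj rk rj (x + (s - t) *\<^sub>R v) v s) \<partial>lborel)"

definition cell :: "('n::finite \<Rightarrow> real) \<Rightarrow> (real^'n) set" where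
  "cell a = {x. \<forall>i. 0 < x $ i \<and> x $ i < a i}"

definition periodic_x :: "('n::finite \<Rightarrow> real) \<Rightarrow> (real^'n \<Rightarrow> 'b \<Rightarrow> 'c) \<Rightarrow> bool" where
  "periodic_x a g \<longleftrightarrow> (\<forall>i x w. g (x + a i *\<^sub>R axis i 1) w = g x w)"

definition mild_solution ::
  "real \<Rightarrow> real \<Rightarrow> real \<Rightarrow> real \<Rightarrow> real \<Rightarrow> real \<Rightarrow> real \<Rightarrow> real \<Rightarrow> real \<Rightarrow> real
   \<Rightarrow> ('n::finite \<Rightarrow> real) \<Rightarrow> (real^'n \<Rightarrow> real^'n \<Rightarrow> real) \<Rightarrow> (real^'n \<Rightarrow> real^'n \<Rightarrow> real)
   \<Rightarrow> 'n dist \<Rightarrow> 'n dist \<Rightarrow> bool" where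
  "mild_solution m1 m2 \<epsilon> \<alpha> \<delta> \<gamma> n11 n12 n21 n22 a f10 f20 f1 f2 \<longleftrightarrow>
     periodic_x a f1 \<and> periodic_x a f2 \<and>
     (\<forall>x v t. 0 \<le> t \<longrightarrow> 0 \<le> f1 x v t \<and> 0 \<le> f2 x v t) \<and>
     (\<forall>t\<ge>0. set_integrable lborel (cell a \<times> UNIV) (\<lambda>(x, v). (1 + (norm v)\<^sup>2) * f1 x v t)) \<and>
     (\<forall>t\<ge>0. set_integrable lborel (cell a \<times> UNIV) (\<lambda>(x, v). (1 + (norm v)\<^sup>2) * f2 x v t)) \<and>
     (AE z in lborel. 0 \<le> snd (snd z) \<longrightarrow>
        f1 (fst z) (fst (snd z)) (snd (snd z)) =
        mild_rhs n11 n12 (rho f1 f2) (rho f2 f1)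
          (\<lambda>x v t. maxw m1 (dens f1 x t) (vel f1 x t) (temp m1 f1 x t) v)
          (\<lambda>x v t. maxw m1 (dens f1 x t) (u12 \<delta> f1 f2 x t) (T12 m1 m2 \<alpha> \<gamma> f1 f2 x t) v)
          f10 (fst z) (fst (snd z)) (snd (snd z))) \<and>
     (AE z in lborel. 0 \<le> snd (snd z) \<longrightarrow>
        f2 (fst z) (fst (snd z)) (snd (snd z)) =
        mild_rhs n22 n21 (rho f2 f1) (rho f1 f2)
          (\<lambda>x v t. maxw m2 (dens f2 x t) (vel f2 x t) (temp m2 f2 x t) v)
          (\<lambda>x v t. maxw m2 (dens f2 x t) (u21 m1 m2 \<epsilon> \<delta> f1 f2 x t) (T21 m1 m2 \<epsilon> \<alpha> \<delta> \<gamma> f1 f2 x t) v)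
          f20 (fst z) (fst (snd z)) (snd (snd z)))"

end

theory Submission
  imports Defs
begin

(* Nonnegativity of f_k makes the densities n_k, hence rho_k and every Maxwellian, nonnegative, so the
   gain term is nonnegative and f_k inherits strict positivity from f_k^0. *)

lemma dens_nonneg: "(\<And>v. 0 \<le> f x v t) \<Longrightarrow> 0 \<le> dens f x t"
  unfolding dens_def by (rule integral_nonneg_AE) auto

lemma rho_nonneg: "0 \<le> dens f x t \<Longrightarrow> 0 \<le> dens g x t \<Longrightarrow> 0 \<le> rho f g x t"
  unfolding rho_def by simp

lemma maxw_nonneg: "0 \<le> n \<Longrightarrow> 0 \<le> maxw m n u T v"
  unfolding maxw_def by (intro mult_nonneg_nonneg divide_nonneg_nonneg) auto

lemma mild_rhs_pos:
  assumes "0 \<le> nkk" "0 \<le> nkj" "0 < f0 (x - t *\<^sub>R v) v"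
    and gain_nonneg: "\<And>y s. 0 \<le> s \<Longrightarrow> 0 \<le> rk y s \<and> 0 \<le> rj y s \<and> 0 \<le> Mk y v s \<and> 0 \<le> Mkj y v s"
  shows "0 < mild_rhs nkk nkj rk rj Mk Mkj f0 x v t"
proof -
  let ?y = "\<lambda>s. x + (s - t) *\<^sub>R v"
  let ?gain = "\<lambda>s. (nkk * rk (?y s) s * Mk (?y s) v s + nkj * rj (?y s) s * Mkj (?y s) v s)
                    * exp (acoef nkk nkj rk rj (?y s) v s)"
  have "0 \<le> indicator {0..t} s *\<^sub>R ?gain s" for s
    using gain_nonneg[of s "?y s"] assms(1,2) by (cases "s \<in> {0..t}") auto
  then have "0 \<le> (\<integral>s\<in>{0..t}. ?gain s \<partial>lborel)"
    unfolding set_lebesgue_integral_def by (intro integral_nonneg_AE AE_I2)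
  then show ?thesis
    unfolding mild_rhs_def using assms(3) by (intro add_pos_nonneg) auto
qed

lemma mild_rhs_maxw_pos:
  assumes "0 \<le> nkk" "0 \<le> nkj" "0 < f0 (x - t *\<^sub>R v) v"
    and dens: "\<And>y s. 0 \<le> s \<Longrightarrow> 0 \<le> dens fk y s \<and> 0 \<le> dens fj y s"
  shows "0 < mild_rhs nkk nkj (rho fk fj) (rho fj fk)
                (\<lambda>x v t. maxw m (dens fk x t) (U x t) (T x t) v)
                (\<lambda>x v t. maxw m (dens fk x t) (U' x t) (T' x t) v) f0 x v t"
  using assms by (intro mild_rhs_pos) (auto intro: rho_nonneg maxw_nonneg)

lemma mild_solution_pos:
  assumes sol: "mild_solution m1 m2 \<epsilon> \<alpha> \<delta> \<gamma> n11 n12 n21 n22 a f10 f20 f1 f2"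
    and freq: "0 \<le> n11" "0 \<le> n12" "0 \<le> n21" "0 \<le> n22"
    and init_pos: "\<And>x v. 0 < f10 x v" "\<And>x v. 0 < f20 x v"
  shows "AE z in lborel. 0 \<le> snd (snd z) \<longrightarrow>
           0 < f1 (fst z) (fst (snd z)) (snd (snd z)) \<and> 0 < f2 (fst z) (fst (snd z)) (snd (snd z))"
proof -
  have "0 \<le> dens f1 y s \<and> 0 \<le> dens f2 y s" if "0 \<le> s" for y s
    using sol that unfolding mild_solution_def by (auto intro: dens_nonneg)
  then have rhs_pos:
    "\<And>x v t U T U' T'. 0 < mild_rhs n11 n12 (rho f1 f2) (rho f2 f1)
        (\<lambda>x v t. maxw m1 (dens f1 x t) (U x t) (T x t) v)
        (\<lambda>x v t. maxw m1 (dens f1 x t) (U' x t) (T' x t) v) f10 x v t"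
    "\<And>x v t U T U' T'. 0 < mild_rhs n22 n21 (rho f2 f1) (rho f1 f2)
        (\<lambda>x v t. maxw m2 (dens f2 x t) (U x t) (T x t) v)
        (\<lambda>x v t. maxw m2 (dens f2 x t) (U' x t) (T' x t) v) f20 x v t"
    using freq init_pos by (auto intro!: mild_rhs_maxw_pos)
  show ?thesis
    using sol unfolding mild_solution_def
    by - (elim conjE, erule (1) eventually_elim2, simp add: rhs_pos)
qed

theorem mainTheorem8:
  fixes m1 m2 \<epsilon> \<alpha> \<delta> \<gamma> n11 n12 n21 n22 q A0 C0 :: real
    and a :: "'n::finite \<Rightarrow> real"
    and f10 f20 :: "real^'n \<Rightarrow> real^'n \<Rightarrow> real"
    and f1 f2 :: "real^'n \<Rightarrow> real^'n \<Rightarrow> real \<Rightarrow> real"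
  assumes masses: "0 < m1" "0 < m2"
    and eps: "0 < \<epsilon>" "\<epsilon> \<le> 1"
    and alpha: "0 \<le> \<alpha>" "\<alpha> \<le> 1"
    and delta: "(m1 / m2 * \<epsilon> - 1) / (1 + m1 / m2 * \<epsilon>) \<le> \<delta>" "\<delta> \<le> 1"
    and gamma: "0 \<le> \<gamma>"
      "\<gamma> \<le> m1 / real CARD('n) * (1 - \<delta>) * ((1 + m1 / m2 * \<epsilon>) * \<delta> + 1 - m1 / m2 * \<epsilon>)"
    and freq: "0 < n11" "0 < n12" "0 < n21" "0 < n22"
    and periods: "\<forall>i. 0 < a i"
    and per0: "periodic_x a f10" "periodic_x a f20"
    and init_nonneg: "\<forall>x v. 0 \<le> f10 x v" "\<forall>x v. 0 \<le> f20 x v"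
    and init_L1: "set_integrable lborel (cell a \<times> UNIV) (\<lambda>(x, v). (1 + (norm v)\<^sup>2) * f10 x v)"
                 "set_integrable lborel (cell a \<times> UNIV) (\<lambda>(x, v). (1 + (norm v)\<^sup>2) * f20 x v)"
    and init_mass: "(\<integral>z\<in>cell a \<times> UNIV. f10 (fst z) (snd z) \<partial>lborel) = 1"
                   "(\<integral>z\<in>cell a \<times> UNIV. f20 (fst z) (snd z) \<partial>lborel) = 1"
    and q: "q > real CARD('n) + 2"
    and sup_bound:
      "bdd_above (range (\<lambda>z. f10 (fst z) (snd z) * (1 + norm (snd z) powr q)))"
      "(SUP z. f10 (fst z) (snd z) * (1 + norm (snd z) powr q)) = A0 / 2"
      "bdd_above (range (\<lambda>z. f20 (fst z) (snd z) * (1 + norm (snd z) powr q)))"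
      "(SUP z. f20 (fst z) (snd z) * (1 + norm (snd z) powr q)) = A0 / 2"
    and C0: "0 < C0"
    and lower: "\<forall>x t. (\<integral>v. f10 (x - t *\<^sub>R v) v \<partial>lborel) \<ge> C0"
               "\<forall>x t. (\<integral>v. f20 (x - t *\<^sub>R v) v \<partial>lborel) \<ge> C0"
    and sol: "mild_solution m1 m2 \<epsilon> \<alpha> \<delta> \<gamma> n11 n12 n21 n22 a f10 f20 f1 f2"
    and init_pos: "\<forall>x v. 0 < f10 x v" "\<forall>x v. 0 < f20 x v"
  shows "AE z in lborel. 0 \<le> snd (snd z) \<longrightarrow>
           0 < f1 (fst z) (fst (snd z)) (snd (snd z)) \<and> 0 < f2 (fst z) (fst (snd z)) (snd (snd z))"
  using freq init_pos by (intro mild_solution_pos[OF sol]) auto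

end
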